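(* Let $G$ be a network (as in the context) that contains a directed circuit, and consider (BBMG) on $G$ with $a_i>0$, $b_i\in\mathbb{R}\setminus\{0\}$, $d_i\in\mathbb{R}$. Then there is no non-constant travelling wave solution $u$ of (BBMG) with all speeds $c_i>0$ whose profiles $\varphi_i$ are all solitary.
   Context: A network $G$ is obtained from a non-empty, simple, connected, at most countable, locally finite graph by realizing each edge $\mathsf{e}_j$ ($j\in\mathbf{E}\subset\mathbb{N}$) as the image of a $\mathcal{C}^2$ Jordan curve $\pi_j:[0,\ell_j]\to\mathbb{R}^m$ with arc-length parameter $x_j$; distinct edges meet in at most one common vertex. $N(\mathsf{v})$ is the set of indices of edges at $\mathsf{v}$; $V_r$ the set of vertices of degree $\ge2$; $\iota_{ij}=1$ if $\pi_j(\ell_j)=\mathsf{v}_i$, $-1$ if $\pi_j(0)=\mathsf{v}_i$, $0$ otherwise. A directed circuit is a sequence of $n\ge2$ edges $\mathsf{e}_{1},\dots,\mathsf{e}_{n}$ with $\pi_{i}(\ell_{i})=\pi_{i+1}(0)$ for $1\le i<n$ and $\pi_n(\ell_n)=\pi_1(0)$. (BBMG): $\partial_t u_i - a_i\partial_i^2\partial_t u_i + b_i u_i\partial_i u_i + d_i\partial_i u_i=0$ on each $\mathsf{e}_i$, $t>0$; for each $\mathsf{v}_p\in V_r$, $t\ge0$: $u_j(t,\mathsf{v}_p)=u_k(t,\mathsf{v}_p)$ for $j,k\in N(\mathsf{v}_p)$ and $\sum_j\iota_{pj}a_j\partial_ju_j(t,\mathsf{v}_p)=0$ (values at $\mathsf{v}_p$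 meaning at $x_j=\pi_j^{-1}(\mathsf{v}_p)$, $\partial_j=\partial/\partial x_j$). A strong solution is continuous on $G$ with $u_i\in\mathcal{C}^{1,1}(\mathsf{e}_i\times[0,\infty))$, $\partial_tu_i\in\mathcal{C}^{2,0}(\mathsf{e}_i\times[0,\infty))$, satisfying (BBMG) pointwise. A travelling wave is a strong solution with speeds $c_i\ge0$ and $\varphi_i\in\mathcal{C}^3(\mathbb{R})$ such that $u_i(x_i,t)=\varphi_i(x_i-c_it)$ for $x_i\in\mathsf{e}_i$, $t\ge0$. A function $\varphi:\mathbb{R}\to\mathbb{R}$ is solitary if it has at most one local extremum and $\lim_{z\to\pm\infty}\varphi(z)$ exist in $\mathbb{R}$. *)

theory Defs
  imports "HOL-Analysis.Analysis"
begin

definition edge_set :: "(nat \<Rightarrow> real) \<Rightarrow> (nat \<Rightarrow> real \<Rightarrow> 'a) \<Rightarrow> nat \<Rightarrow> 'a set" where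
  "edge_set len p j = p j ` {0..len j}"

definition ends :: "(nat \<Rightarrow> real) \<Rightarrow> (nat \<Rightarrow> real \<Rightarrow> 'a) \<Rightarrow> nat \<Rightarrow> 'a set" where
  "ends len p j = {p j 0, p j (len j)}"

definition vertices :: "nat set \<Rightarrow> (nat \<Rightarrow> real) \<Rightarrow> (nat \<Rightarrow> real \<Rightarrow> 'a) \<Rightarrow> 'a set" where
  "vertices E len p = (\<Union>j\<in>E. ends len p j)"

definition incident :: "nat set \<Rightarrow> (nat \<Rightarrow> real) \<Rightarrow> (nat \<Rightarrow> real \<Rightarrow> 'a) \<Rightarrow> 'a \<Rightarrow> nat set" where
  "incident E len p v = {j\<in>E. v \<in> ends len p j}"

definition ramification_vertices :: "nat set \<Rightarrow> (nat \<Rightarrow> real) \<Rightarrow> (nat \<Rightarrow> real \<Rightarrow> 'a) \<Rightarrow> 'a set" where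
  "ramification_vertices E len p = {v\<in>vertices E len p. 2 \<le> card (incident E len p v)}"

definition iota :: "(nat \<Rightarrow> real) \<Rightarrow> (nat \<Rightarrow> real \<Rightarrow> 'a) \<Rightarrow> 'a \<Rightarrow> nat \<Rightarrow> real" where
  "iota len p v j = (if p j (len j) = v then 1 else if p j 0 = v then -1 else 0)"

text \<open>Arc-length coordinate of vertex v on edge j, i.e. the inverse of p j at v.\<close>
definition vpos :: "(nat \<Rightarrow> real) \<Rightarrow> (nat \<Rightarrow> real \<Rightarrow> 'a) \<Rightarrow> 'a \<Rightarrow> nat \<Rightarrow> real" where
  "vpos len p v j = (if p j 0 = v then 0 else len j)"

definition adjacency :: "nat set \<Rightarrow> (nat \<Rightarrow> real) \<Rightarrow> (nat \<Rightarrow> real \<Rightarrow> 'a) \<Rightarrow> ('a \<times> 'a) set" where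
  "adjacency E len p = {(v, w). \<exists>j\<in>E. {v, w} = ends len p j}"

definition C2_arclength_arc :: "real \<Rightarrow> (real \<Rightarrow> 'a::euclidean_space) \<Rightarrow> bool" where
  "C2_arclength_arc l p \<longleftrightarrow> 0 < l \<and> inj_on p {0..l} \<and>
     (\<exists>p' p''. (\<forall>x\<in>{0..l}. (p has_vector_derivative p' x) (at x within {0..l})
                            \<and> (p' has_vector_derivative p'' x) (at x within {0..l})
                            \<and> norm (p' x) = 1)
              \<and> continuous_on {0..l} p'')"

definition network :: "nat set \<Rightarrow> (nat \<Rightarrow> real) \<Rightarrow> (nat \<Rightarrow> real \<Rightarrow> 'a::euclidean_space) \<Rightarrow> bool" where
  "network E len p \<longleftrightarrow>
     E \<noteq> {} \<and>
     (\<forall>j\<in>E. C2_arclength_arc (len j) (p j)) \<and>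
     (\<forall>i\<in>E. \<forall>j\<in>E. i \<noteq> j \<longrightarrow>
         edge_set len p i \<inter> edge_set len p j \<subseteq> ends len p i \<inter> ends len p j
         \<and> card (ends len p i \<inter> ends len p j) \<le> 1) \<and>
     (\<forall>v\<in>vertices E len p. finite (incident E len p v)) \<and>
     (\<forall>v\<in>vertices E len p. \<forall>w\<in>vertices E len p. (v, w) \<in> (adjacency E len p)\<^sup>*)"

definition has_directed_circuit :: "nat set \<Rightarrow> (nat \<Rightarrow> real) \<Rightarrow> (nat \<Rightarrow> real \<Rightarrow> 'a) \<Rightarrow> bool" where
  "has_directed_circuit E len p \<longleftrightarrow>
     (\<exists>es. 2 \<le> length es \<and> set es \<subseteq> E \<and>
        (\<forall>k. Suc k < length es \<longrightarrow> p (es!k) (len (es!k)) = p (es!Suc k) 0) \<and>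
        p (last es) (len (last es)) = p (hd es) 0)"

text \<open>u i x t is the value on edge i at arc-length x and time t.
  ux = partial_x u, ut = partial_t u, utx = partial_x partial_t u, utxx = partial_x^2 partial_t u,
  all taken within the closed domain {0..len i} x [0,oo).\<close>
definition strong_solution ::
  "nat set \<Rightarrow> (nat \<Rightarrow> real) \<Rightarrow> (nat \<Rightarrow> real \<Rightarrow> 'a) \<Rightarrow> (nat \<Rightarrow> real) \<Rightarrow> (nat \<Rightarrow> real) \<Rightarrow> (nat \<Rightarrow> real)
     \<Rightarrow> (nat \<Rightarrow> real \<Rightarrow> real \<Rightarrow> real) \<Rightarrow> bool" where
  "strong_solution E len p a b d u \<longleftrightarrow>
    (\<exists>ux ut utx utxx.
      (\<forall>i\<in>E.
         continuous_on ({0..len i} \<times> {0..}) (\<lambda>(x, t). u i x t) \<and>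
         continuous_on ({0..len i} \<times> {0..}) (\<lambda>(x, t). ux i x t) \<and>
         continuous_on ({0..len i} \<times> {0..}) (\<lambda>(x, t). ut i x t) \<and>
         continuous_on ({0..len i} \<times> {0..}) (\<lambda>(x, t). utx i x t) \<and>
         continuous_on ({0..len i} \<times> {0..}) (\<lambda>(x, t). utxx i x t) \<and>
         (\<forall>x\<in>{0..len i}. \<forall>t\<ge>0.
            ((\<lambda>y. u i y t) has_real_derivative ux i x t) (at x within {0..len i}) \<and>
            ((\<lambda>s. u i x s) has_real_derivative ut i x t) (at t within {0..}) \<and>
            ((\<lambda>y. ut i y t) has_real_derivative utx i x t) (at x within {0..len i}) \<and>
            ((\<lambda>y. utx i y t) has_real_derivative utxx i x t) (at x within {0..len i})) \<and>
         (\<forall>x\<in>{0..len i}. \<forall>t>0.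
            ut i x t - a i * utxx i x t + b i * u i x t * ux i x t + d i * ux i x t = 0)) \<and>
      (\<forall>v\<in>ramification_vertices E len p. \<forall>t\<ge>0.
         (\<forall>j\<in>incident E len p v. \<forall>k\<in>incident E len p v.
             u j (vpos len p v j) t = u k (vpos len p v k) t) \<and>
         (\<Sum>j\<in>incident E len p v. iota len p v j * a j * ux j (vpos len p v j) t) = 0))"

definition C3 :: "(real \<Rightarrow> real) \<Rightarrow> bool" where
  "C3 f \<longleftrightarrow> (\<forall>k<3. \<forall>x. ((deriv ^^ k) f) differentiable (at x)) \<and> continuous_on UNIV ((deriv ^^ 3) f)"

definition travelling_wave ::
  "nat set \<Rightarrow> (nat \<Rightarrow> real) \<Rightarrow> (nat \<Rightarrow> real \<Rightarrow> 'a) \<Rightarrow> (nat \<Rightarrow> real) \<Rightarrow> (nat \<Rightarrow> real) \<Rightarrow> (nat \<Rightarrow> real)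
     \<Rightarrow> (nat \<Rightarrow> real \<Rightarrow> real \<Rightarrow> real) \<Rightarrow> (nat \<Rightarrow> real) \<Rightarrow> (nat \<Rightarrow> real \<Rightarrow> real) \<Rightarrow> bool" where
  "travelling_wave E len p a b d u c phi \<longleftrightarrow>
     strong_solution E len p a b d u \<and>
     (\<forall>i\<in>E. 0 \<le> c i \<and> C3 (phi i) \<and>
        (\<forall>x\<in>{0..len i}. \<forall>t\<ge>0. u i x t = phi i (x - c i * t)))"

definition local_extremum :: "(real \<Rightarrow> real) \<Rightarrow> real \<Rightarrow> bool" where
  "local_extremum f z \<longleftrightarrow>
     (\<exists>e>0. \<forall>y. \<bar>y - z\<bar> < e \<longrightarrow> f y \<le> f z) \<or> (\<exists>e>0. \<forall>y. \<bar>y - z\<bar> < e \<longrightarrow> f z \<le> f y)"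

definition solitary :: "(real \<Rightarrow> real) \<Rightarrow> bool" where
  "solitary f \<longleftrightarrow> (\<forall>z1 z2. local_extremum f z1 \<and> local_extremum f z2 \<longrightarrow> z1 = z2) \<and>
     (\<exists>L. (f \<longlongrightarrow> L) at_top) \<and> (\<exists>L. (f \<longlongrightarrow> L) at_bot)"

end

theory Submission
  imports Defs "HOL-Real_Asymp.Real_Asymp"
begin

text \<open>Following a wave once around a directed circuit takes the positive time
  \<open>T = \<Sum> len j / c j\<close>, and continuity at the junctions shows that the value at the head of
  the last edge is \<open>T\<close>-periodic in time. Since that value is \<open>\<phi> (len - c t)\<close>, the profile
  \<open>\<phi>\<close> is periodic on a half-line \<open>]-\<infinity>, len]\<close>; having a limit at \<open>-\<infinity>\<close>, it is constant there.
  A function constant on a half-line has infinitely many local extrema, so it is not solitary.\<close>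

lemma sum_list_pos:
  fixes xs :: "'b::ordered_comm_monoid_add list"
  assumes "xs \<noteq> []" and "\<And>x. x \<in> set xs \<Longrightarrow> 0 < x"
  shows "0 < sum_list xs"
  using assms
proof (induction xs rule: list_nonempty_induct)
  case (cons x xs)
  then show ?case by (simp add: add_pos_pos)
qed simp

lemma not_solitary_if_constant_on_halfline:
  assumes "\<And>z. z \<le> r \<Longrightarrow> f z = L"
  shows "\<not> solitary f"
proof -
  have "local_extremum f z" if "z \<le> r - 1" for z
    unfolding local_extremum_def
    by (rule disjI1, rule exI[of _ 1]) (use assms that in \<open>auto simp: abs_less_iff\<close>)
  from this[of "r - 1"] this[of "r - 2"] show ?thesis
    unfolding solitary_def by force
qed

lemma eq_limit_at_bot_if_periodic_on_halfline:
  fixes f :: "real \<Rightarrow> 'b::t2_space"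
  assumes "0 < P" and periodic: "\<And>s. s \<le> r \<Longrightarrow> f (s - P) = f s"
    and lim: "(f \<longlongrightarrow> L) at_bot" and "z \<le> r"
  shows "f z = L"
proof -
  have iterate: "f (z - real m * P) = f z" for m :: nat
  proof (induction m)
    case (Suc m)
    have "0 \<le> real m * P" using \<open>0 < P\<close> by simp
    then have "z - real m * P \<le> r" using \<open>z \<le> r\<close> by linarith
    then show ?case
      using periodic[of "z - real m * P"] Suc.IH by (simp add: algebra_simps)
  qed simp
  have "filterlim (\<lambda>m::nat. z - real m * P) at_bot sequentially"
    using \<open>0 < P\<close> by real_asymp
  from filterlim_compose[OF lim this] have "(\<lambda>m::nat. f z) \<longlonglongrightarrow> L"
    by (simp add: iterate)
  then show ?thesis by (simp add: LIMSEQ_const_iff)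
qed

text \<open>\<open>g j t\<close> and \<open>h j t\<close> are the values at the tail and at the head of edge \<open>j\<close> at time \<open>t\<close>,
  and \<open>\<tau> j\<close> is the travel time along \<open>j\<close>.\<close>

lemma transport_along_path:
  fixes g h :: "nat \<Rightarrow> real \<Rightarrow> 'b" and \<tau> :: "nat \<Rightarrow> real"
  assumes "es \<noteq> []"
    and transport: "\<And>j t. j \<in> set es \<Longrightarrow> 0 \<le> t \<Longrightarrow> h j (t + \<tau> j) = g j t"
    and nonneg: "\<And>j. j \<in> set es \<Longrightarrow> 0 \<le> \<tau> j"
    and junction: "\<And>k t. Suc k < length es \<Longrightarrow> 0 \<le> t \<Longrightarrow> h (es ! k) t = g (es ! Suc k) t"
    and "0 \<le> t"
  shows "h (last es) (t + sum_list (map \<tau> es)) = g (hd es) t"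
  using assms
proof (induction es arbitrary: t rule: list_nonempty_induct)
  case (single x)
  then show ?case by simp
next
  case (cons x xs)
  have "h (last xs) ((t + \<tau> x) + sum_list (map \<tau> xs)) = g (hd xs) (t + \<tau> x)"
    using cons.prems by (intro cons.IH) (force simp: nonneg)+
  also have "\<dots> = h x (t + \<tau> x)"
    using cons.prems(3)[of 0 "t + \<tau> x"] cons.hyps cons.prems by (simp add: hd_conv_nth)
  also have "\<dots> = g x t"
    using cons.prems by simp
  finally show ?case
    using cons.hyps by (simp add: algebra_simps)
qed

lemma C2_arclength_arc_ends_distinct:
  assumes "C2_arclength_arc l p"
  shows "p 0 \<noteq> p l"
  using assms unfolding C2_arclength_arc_def inj_on_def
  by (metis atLeastAtMost_iff less_eq_real_def less_irrefl)

lemma network_arc_length_pos: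
  assumes "network E len p" and "j \<in> E"
  shows "0 < len j"
  using assms unfolding network_def C2_arclength_arc_def by auto

lemma strong_solution_continuous_at_junction:
  assumes net: "network E len p" and sol: "strong_solution E len p a b d u"
    and "i \<in> E" "j \<in> E" and head_tail: "p i (len i) = p j 0" and "0 \<le> t"
  shows "u i (len i) t = u j 0 t"
proof -
  define v where "v = p i (len i)"
  have arcs: "C2_arclength_arc (len i) (p i)" "C2_arclength_arc (len j) (p j)"
    using net \<open>i \<in> E\<close> \<open>j \<in> E\<close> unfolding network_def by auto
  have "i \<noteq> j"
    using head_tail C2_arclength_arc_ends_distinct[OF arcs(2)] by auto
  have v: "v \<in> vertices E len p"
    using \<open>i \<in> E\<close> unfolding vertices_def ends_def v_def by auto
  have incident: "i \<in> incident E len p v" "j \<in> incident E len p v"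
    using \<open>i \<in> E\<close> \<open>j \<in> E\<close> head_tail unfolding incident_def ends_def v_def by auto
  have "finite (incident E len p v)"
    using net v unfolding network_def by auto
  then have "card {i, j} \<le> card (incident E len p v)"
    using incident by (intro card_mono) auto
  then have "v \<in> ramification_vertices E len p"
    using v \<open>i \<noteq> j\<close> unfolding ramification_vertices_def by auto
  then have "u i (vpos len p v i) t = u j (vpos len p v j) t"
    using sol incident \<open>0 \<le> t\<close> unfolding strong_solution_def by blast
  moreover have "vpos len p v i = len i" "vpos len p v j = 0"
    using C2_arclength_arc_ends_distinct[OF arcs(1)] head_tail unfolding vpos_def v_def by auto
  ultimately show ?thesis by simp
qed

lemma travelling_wave_transport:
  assumes tw: "travelling_wave E len p a b d u c phi" and "j \<in> E"
    and "0 < c j" and "0 \<le> len j" and "0 \<le> t"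
  shows "u j (len j) (t + len j / c j) = u j 0 t"
proof -
  have profile: "\<And>x s. x \<in> {0..len j} \<Longrightarrow> 0 \<le> s \<Longrightarrow> u j x s = phi j (x - c j * s)"
    using tw \<open>j \<in> E\<close> unfolding travelling_wave_def by auto
  have "len j - c j * (t + len j / c j) = 0 - c j * t"
    using \<open>0 < c j\<close> by (simp add: field_simps)
  then show ?thesis
    using assms by (simp add: profile)
qed

lemma travelling_wave_periodic_along_circuit:
  assumes net: "network E len p" and tw: "travelling_wave E len p a b d u c phi"
    and speed: "\<forall>i\<in>E. 0 < c i"
    and "es \<noteq> []" and es: "set es \<subseteq> E"
    and chain: "\<forall>k. Suc k < length es \<longrightarrow> p (es!k) (len (es!k)) = p (es!Suc k) 0"
    and closed: "p (last es) (len (last es)) = p (hd es) 0"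
    and "0 \<le> t"
  shows "u (last es) (len (last es)) (t + (\<Sum>i\<leftarrow>es. len i / c i))
    = u (last es) (len (last es)) t"
proof -
  have solution: "strong_solution E len p a b d u"
    using tw unfolding travelling_wave_def by simp
  have len: "\<And>j. j \<in> E \<Longrightarrow> 0 < len j"
    using network_arc_length_pos[OF net] .
  have junction: "u (es!k) (len (es!k)) t = u (es!Suc k) 0 t"
    if "Suc k < length es" and "0 \<le> t" for k t
    using strong_solution_continuous_at_junction[OF net solution] chain es that
    by (simp add: subset_iff)
  have transport: "u i (len i) (t + len i / c i) = u i 0 t" if "i \<in> set es" and "0 \<le> t" for i t
    using travelling_wave_transport[OF tw] es speed len that by (auto simp: less_imp_le)
  have "last es \<in> E" and "hd es \<in> E"
    using \<open>es \<noteq> []\<close> es by auto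
  have "u (last es) (len (last es)) (t + (\<Sum>i\<leftarrow>es. len i / c i)) = u (hd es) 0 t"
    by (rule transport_along_path[where g = "\<lambda>i. u i 0" and h = "\<lambda>i. u i (len i)"])
      (use \<open>es \<noteq> []\<close> transport junction \<open>0 \<le> t\<close> es speed len in \<open>auto simp: subset_iff less_imp_le\<close>)
  also have "\<dots> = u (last es) (len (last es)) t"
    using strong_solution_continuous_at_junction[OF net solution \<open>last es \<in> E\<close> \<open>hd es \<in> E\<close>]
      closed \<open>0 \<le> t\<close> by simp
  finally show ?thesis .
qed

lemma travelling_wave_profile_periodic:
  assumes tw: "travelling_wave E len p a b d u c phi" and "j \<in> E"
    and "0 < c j" and "0 \<le> len j" and "0 \<le> T"
    and periodic: "\<And>t. 0 \<le> t \<Longrightarrow> u j (len j) (t + T) = u j (len j) t"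
    and "z \<le> len j"
  shows "phi j (z - c j * T) = phi j z"
proof -
  have profile: "\<And>s. 0 \<le> s \<Longrightarrow> u j (len j) s = phi j (len j - c j * s)"
    using tw \<open>j \<in> E\<close> \<open>0 \<le> len j\<close> unfolding travelling_wave_def by auto
  define t where "t = (len j - z) / c j"
  have "0 \<le> t" and position: "len j - c j * t = z"
    using \<open>0 < c j\<close> \<open>z \<le> len j\<close> unfolding t_def by auto
  have "z - c j * T = len j - c j * (t + T)"
    using position by (simp add: distrib_left)
  then have "phi j (z - c j * T) = u j (len j) (t + T)"
    using profile[of "t + T"] \<open>0 \<le> t\<close> \<open>0 \<le> T\<close> by simp
  also have "\<dots> = u j (len j) t"
    using periodic \<open>0 \<le> t\<close> .
  also have "\<dots> = phi j z"
    using profile \<open>0 \<le> t\<close> position by simp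
  finally show ?thesis .
qed

theorem lemma7p1:
  fixes E :: "nat set" and len :: "nat \<Rightarrow> real" and p :: "nat \<Rightarrow> real \<Rightarrow> 'a::euclidean_space"
    and a b d :: "nat \<Rightarrow> real"
  assumes "network E len p"
    and "has_directed_circuit E len p"
    and "\<forall>i\<in>E. 0 < a i \<and> b i \<noteq> 0"
  shows "\<not> (\<exists>u c phi. travelling_wave E len p a b d u c phi \<and>
              (\<forall>i\<in>E. 0 < c i) \<and> (\<forall>i\<in>E. solitary (phi i)) \<and>
              (\<exists>i\<in>E. \<exists>j\<in>E. \<exists>x\<in>{0..len i}. \<exists>y\<in>{0..len j}. \<exists>t\<ge>0. \<exists>s\<ge>0. u i x t \<noteq> u j y s))"
proof
  assume "\<exists>u c phi. travelling_wave E len p a b d u c phi \<and>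
              (\<forall>i\<in>E. 0 < c i) \<and> (\<forall>i\<in>E. solitary (phi i)) \<and>
              (\<exists>i\<in>E. \<exists>j\<in>E. \<exists>x\<in>{0..len i}. \<exists>y\<in>{0..len j}. \<exists>t\<ge>0. \<exists>s\<ge>0. u i x t \<noteq> u j y s)"
  then obtain u c phi where tw: "travelling_wave E len p a b d u c phi"
    and speed: "\<forall>i\<in>E. 0 < c i" and solitary: "\<forall>i\<in>E. solitary (phi i)" by blast
  obtain es where "2 \<le> length es" and es: "set es \<subseteq> E"
    and chain: "\<forall>k. Suc k < length es \<longrightarrow> p (es!k) (len (es!k)) = p (es!Suc k) 0"
    and closed: "p (last es) (len (last es)) = p (hd es) 0"
    using assms(2) unfolding has_directed_circuit_def by blast
  then have "es \<noteq> []" by auto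
  define j where "j = last es"
  define T where "T = (\<Sum>i\<leftarrow>es. len i / c i)"
  have "j \<in> E"
    using \<open>es \<noteq> []\<close> es unfolding j_def by auto
  then have "0 < len j" and "0 < c j"
    using speed network_arc_length_pos[OF assms(1)] by auto
  have "0 < T"
    unfolding T_def using \<open>es \<noteq> []\<close> es speed network_arc_length_pos[OF assms(1)]
    by (intro sum_list_pos) (auto simp: subset_iff)
  have "phi j (z - c j * T) = phi j z" if "z \<le> len j" for z
    using travelling_wave_profile_periodic[OF tw \<open>j \<in> E\<close> \<open>0 < c j\<close>] that \<open>0 < len j\<close> \<open>0 < T\<close>
      travelling_wave_periodic_along_circuit[OF assms(1) tw speed \<open>es \<noteq> []\<close> es chain closed]
    unfolding j_def T_def by simp
  moreover obtain L where "(phi j \<longlongrightarrow> L) at_bot"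
    using solitary \<open>j \<in> E\<close> unfolding solitary_def by blast
  ultimately have "phi j z = L" if "z \<le> len j" for z
    using eq_limit_at_bot_if_periodic_on_halfline[of "c j * T" "len j" "phi j" L z]
      \<open>0 < c j\<close> \<open>0 < T\<close> that by simp
  then have "\<not> solitary (phi j)"
    by (rule not_solitary_if_constant_on_halfline)
  then show False
    using solitary \<open>j \<in> E\<close> by simp
qed

end
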